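(* Let $\tau\in\mathbb{R}\setminus\mathbb{Q}$ and $\bar\varphi\in\mathbb{T}$, and put $\bar\varphi'=R_{1/2}\bar\varphi$. Then there exists a Denjoy map $f:\mathbb{T}\to\mathbb{T}$ such that: (a) $f$ is $\mathbb{Z}_2$-equivariant, i.e. $f\circ R_{1/2}=R_{1/2}\circ f$; (b) the rotation number of $f$ is $\rho(f)=\bar\tau$; (c) the minimal Cantor set $C$ of $f$ satisfies $R_{1/2}C=C$, and there is a Cantor function $\mathcal{P}$ associated to $C$ with $\mathcal{P}\circ R_{1/2}=R_{1/2}\circ\mathcal{P}$, $\mathcal{P}(A)=\{\overline{\varphi+n\tau}:n\in\mathbb{Z}\}\cup\{\overline{\varphi'+n\tau}:n\in\mathbb{Z}\}$ ($A$ the accessible set of $C$), and $\mathcal{P}\circ f=R_{\bar\tau}\circ\mathcal{P}$.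
   Context: $\mathbb{T}=\mathbb{R}/\mathbb{Z}$ with points $\bar\theta=\theta+\mathbb{Z}$; $R_{\bar\eta}(\bar\theta)=\overline{\theta+\eta}$. A Denjoy map is an orientation preserving homeomorphism of $\mathbb{T}$ with irrational rotation number which is not topologically conjugate to any rotation; such a map has a unique minimal set, which is a Cantor set. A Cantor set is a compact, totally disconnected, perfect subset $C\subset\mathbb{T}$, written $C=\mathbb{T}\setminus\bigcup_{k\ge0}\dot\alpha_k$ with $\{\alpha_k\}$ pairwise disjoint closed arcs; its accessible set $A$ is the set of endpoints of all $\alpha_k$. $\bar\theta_1\sim\bar\theta_2$ means equal or in the same $\alpha_k$. A Cantor function associated to $C$ is a continuous, cyclic-order-preserving map $\mathcal{P}:\mathbb{T}\to\mathbb{T}$ with $\mathcal{P}(\bar\theta_1)=\mathcal{P}(\bar\theta_2)$ iff $\bar\theta_1\sim\bar\theta_2$. A map $g:\mathbb{T}\to\mathbb{T}$ is $\mathbb{Z}_m$-equivariant if $g(\bar\theta+\tfrac1m)=g(\bar\theta)+\tfrac1m$ for all $\bar\theta$. *)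

theory Defs
  imports "HOL-Analysis.Analysis"
begin

text \<open>The circle T = R/Z is modelled as the unit circle in the complex plane,
  the point theta + Z corresponding to circ theta = exp(2 pi i theta).\<close>

definition circ :: "real \<Rightarrow> complex" where
  "circ x = cis (2 * pi * x)"

definition circle :: "complex set" where
  "circle = sphere 0 1"

definition rot :: "real \<Rightarrow> complex \<Rightarrow> complex" where
  "rot \<eta> z = circ \<eta> * z"

definition lift_of :: "(real \<Rightarrow> real) \<Rightarrow> (complex \<Rightarrow> complex) \<Rightarrow> bool" where
  "lift_of F f \<longleftrightarrow> continuous_on UNIV F \<and> (\<forall>x. F (x + 1) = F x + 1)
      \<and> (\<forall>x. f (circ x) = circ (F x))"

definition orient_pres_homeo :: "(complex \<Rightarrow> complex) \<Rightarrow> bool" where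
  "orient_pres_homeo f \<longleftrightarrow> (\<exists>g. homeomorphism circle circle f g)
      \<and> (\<exists>F. lift_of F f \<and> strict_mono F)"

definition rot_number :: "(complex \<Rightarrow> complex) \<Rightarrow> complex" where
  "rot_number f = (let F = (SOME F. lift_of F f \<and> strict_mono F)
                   in circ (lim (\<lambda>n. (F ^^ n) 0 / real n)))"

definition conj_to_rotation :: "(complex \<Rightarrow> complex) \<Rightarrow> bool" where
  "conj_to_rotation f \<longleftrightarrow> (\<exists>h h' \<eta>. homeomorphism circle circle h h'
      \<and> (\<forall>z\<in>circle. h (f z) = rot \<eta> (h z)))"

definition denjoy_map :: "(complex \<Rightarrow> complex) \<Rightarrow> bool" where
  "denjoy_map f \<longleftrightarrow> orient_pres_homeo f
      \<and> (\<exists>t. t \<notin> \<rat> \<and> rot_number f = circ t)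
      \<and> \<not> conj_to_rotation f"

definition minimal_set :: "(complex \<Rightarrow> complex) \<Rightarrow> complex set \<Rightarrow> bool" where
  "minimal_set f C \<longleftrightarrow> C \<noteq> {} \<and> C \<subseteq> circle \<and> closed C \<and> f ` C \<subseteq> C
      \<and> (\<forall>K. K \<noteq> {} \<and> closed K \<and> K \<subseteq> C \<and> f ` K \<subseteq> K \<longrightarrow> K = C)"

definition cantor_set :: "complex set \<Rightarrow> bool" where
  "cantor_set C \<longleftrightarrow> C \<subseteq> circle \<and> compact C
      \<and> (\<forall>K. K \<subseteq> C \<and> connected K \<longrightarrow> (\<exists>a. K \<subseteq> {a}))
      \<and> (\<forall>x\<in>C. x islimpt C)"

text \<open>Accessible set: endpoints of the complementary gaps (points of C which are
  isolated from one side).\<close>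
definition accessible :: "complex set \<Rightarrow> complex set" where
  "accessible C = {z \<in> C. \<exists>a \<epsilon>. circ a = z \<and> \<epsilon> > 0 \<and>
      (circ ` {a<..<a+\<epsilon>} \<inter> C = {} \<or> circ ` {a-\<epsilon><..<a} \<inter> C = {})}"

definition gap_arc :: "complex set \<Rightarrow> complex \<Rightarrow> complex \<Rightarrow> bool" where
  "gap_arc C z w \<longleftrightarrow> (\<exists>a b. circ a = z \<and> circ b = w \<and> a < b \<and> circ ` {a<..<b} \<inter> C = {})"

text \<open>z ~ w: equal or in the same complementary closed arc alpha_k.\<close>
definition sim_C :: "complex set \<Rightarrow> complex \<Rightarrow> complex \<Rightarrow> bool" where
  "sim_C C z w \<longleftrightarrow> z = w \<or> gap_arc C z w \<or> gap_arc C w z"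

definition cyclic_order_preserving :: "(complex \<Rightarrow> complex) \<Rightarrow> bool" where
  "cyclic_order_preserving P \<longleftrightarrow> (\<exists>\<Phi>. mono \<Phi> \<and> (\<forall>x. \<Phi> (x + 1) = \<Phi> x + 1)
      \<and> (\<forall>x. P (circ x) = circ (\<Phi> x)))"

definition cantor_function :: "complex set \<Rightarrow> (complex \<Rightarrow> complex) \<Rightarrow> bool" where
  "cantor_function C P \<longleftrightarrow> continuous_on circle P \<and> P ` circle \<subseteq> circle
      \<and> cyclic_order_preserving P
      \<and> (\<forall>z\<in>circle. \<forall>w\<in>circle. P z = P w \<longleftrightarrow> sim_C C z w)"

end

theory Submission
  imports Defs "HOL-Library.Real_Mod"
begin

(* The Denjoy map is obtained by the classical blow-up of the irrational
   rotation R_tau along the countable set M = {phi + n tau + m/2}, the lift to the real line of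
   the two orbits of phi and phi' = phi + 1/2; M is invariant under y |-> y + tau and
   y |-> y + 1/2.  Suppose every real y is replaced by a closed interval (its fibre)
   [G y, G y + J y] such that the fibres are ordered like their indices, cover the line, are
   non-degenerate exactly for y in M, and are equivariant under translation by 1/2 (locale
   denjoy_blowup).  Collapsing each fibre to its index gives a monotone degree-one map Phi, and
   mapping the fibre of y affinely onto the fibre of y + tau gives an increasing lift F with
   Phi o F = Phi + tau.  On the circle F induces the Denjoy map f, Phi the Cantor function P,
   and the points outside the open fibres form the minimal Cantor set C. *)

section \<open>The circle and its lifts\<close>

lemma circ_add: "circ (x + y) = circ x * circ y"
  by (simp add: circ_def cis_mult distrib_left)

lemma norm_circ [simp]: "norm (circ x) = 1"
  by (simp add: circ_def)

lemma circ_in_circle [simp]: "circ x \<in> circle"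
  by (simp add: circle_def)

lemma circ_half: "circ (1/2) = -1"
  by (simp add: circ_def)

lemma circ_eq_1_iff: "circ t = 1 \<longleftrightarrow> t \<in> \<int>"
proof -
  have "circ t = 1 \<longleftrightarrow> (\<exists>n::int. t = of_int n)"
    unfolding circ_def cis_eq_1_iff by (auto simp: field_simps)
  then show ?thesis by (auto elim: Ints_cases)
qed

lemma circ_eq_iff: "circ x = circ y \<longleftrightarrow> x - y \<in> \<int>"
proof -
  have "circ x = circ (x - y) * circ y" by (metis circ_add diff_add_cancel)
  moreover have "circ y \<noteq> 0" using norm_circ[of y] by (auto simp del: norm_circ)
  ultimately have "circ x = circ y \<longleftrightarrow> circ (x - y) = 1" by auto
  then show ?thesis by (simp add: circ_eq_1_iff)
qed

lemma circle_Arg: "z \<in> circle \<Longrightarrow> circ (Arg z / (2*pi)) = z"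
proof -
  assume "z \<in> circle"
  then have n: "norm z = 1" by (simp add: circle_def)
  then have "z \<noteq> 0" by auto
  then have "circ (Arg z / (2*pi)) = sgn z" by (simp add: circ_def cis_Arg)
  then show ?thesis using n by (simp add: sgn_div_norm)
qed

lemma circle_obtain: "z \<in> circle \<Longrightarrow> \<exists>x. z = circ x"
  using circle_Arg by metis

lemma continuous_circ: "continuous_on A circ"
  unfolding circ_def by (intro continuous_intros)

lemma circ_near:
  assumes "e > 0" shows "\<exists>\<delta>>0. \<forall>x. \<bar>x - c\<bar> < \<delta> \<longrightarrow> dist (circ x) (circ c) < e"
proof -
  have "isCont circ c" using continuous_circ[of UNIV] continuous_on_eq_continuous_at by blast
  then show ?thesis using assms unfolding continuous_at_eps_delta dist_real_def by blast
qed

lemma rot_circ: "rot a (circ x) = circ (x + a)"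
  by (simp add: rot_def circ_add mult.commute)

lemma int_periodic:
  fixes h :: "real \<Rightarrow> 'a"
  assumes "\<And>x. h (x + 1) = h x"
  shows "h (x + of_int m) = h x"
proof -
  have nat: "h (y + of_nat n) = h y" for y n
  proof (induction n)
    case (Suc n)
    have "y + of_nat (Suc n) = (y + of_nat n) + 1" by simp
    then show ?case using Suc.IH assms by metis
  qed simp
  show ?thesis
  proof (cases "m \<ge> 0")
    case True
    then show ?thesis using nat[of x "nat m"] by simp
  next
    case False
    then have "x = (x + of_int m) + of_nat (nat (- m))" by simp
    then show ?thesis using nat[of "x + of_int m" "nat (- m)"] by metis
  qed
qed

lemma lift_int:
  fixes \<Psi> :: "real \<Rightarrow> real"
  assumes "\<And>x. \<Psi> (x + 1) = \<Psi> x + (1::real)"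
  shows "\<Psi> (x + of_int m) = \<Psi> x + of_int m"
  using int_periodic[of "\<lambda>x. \<Psi> x - x" x m] assms by (simp add: algebra_simps)

lemma lift_Ints:
  fixes \<Psi> :: "real \<Rightarrow> real"
  assumes "\<And>x. \<Psi> (x + 1) = \<Psi> x + (1::real)" "k \<in> \<int>"
  shows "\<Psi> (x + k) = \<Psi> x + k"
  using assms(2) lift_int[of \<Psi>, OF assms(1)] by (auto elim!: Ints_cases)

lemma circ_lift_wd:
  fixes \<Psi> :: "real \<Rightarrow> real"
  assumes "\<And>x. \<Psi> (x + 1) = \<Psi> x + (1::real)" "circ a = circ b"
  shows "circ (\<Psi> a) = circ (\<Psi> b)"
proof -
  have "a - b \<in> \<int>" using assms(2) circ_eq_iff by blast
  then have "\<Psi> (b + (a - b)) = \<Psi> b + (a - b)" by (rule lift_Ints[of \<Psi>, OF assms(1)])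
  then have "\<Psi> a - \<Psi> b \<in> \<int>" using \<open>a - b \<in> \<int>\<close> by simp
  then show ?thesis using circ_eq_iff by blast
qed

definition induced :: "(real \<Rightarrow> real) \<Rightarrow> complex \<Rightarrow> complex" where
  "induced \<Psi> z = circ (\<Psi> (Arg z / (2*pi)))"

lemma induced_circ:
  fixes \<Psi> :: "real \<Rightarrow> real"
  assumes "\<And>x. \<Psi> (x + 1) = \<Psi> x + (1::real)"
  shows "induced \<Psi> (circ x) = circ (\<Psi> x)"
  unfolding induced_def by (rule circ_lift_wd[of \<Psi>, OF assms]) (simp add: circle_Arg)

lemma induced_in_circle [simp]: "induced \<Psi> z \<in> circle"
  by (simp add: induced_def)

text \<open>A continuous inverse of \<open>circ\<close> on the circle slit at \<open>circ p\<close>, with values in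
  \<open>]p, p+1[\<close>: the local charts of the circle.\<close>
definition lift_from :: "real \<Rightarrow> complex \<Rightarrow> real" where
  "lift_from p z = p + 1/2 + Arg (z * circ (1/2 - p)) / (2*pi)"

lemma circle_lift_from:
  assumes "z \<in> circle" "z \<noteq> circ p"
  shows "\<exists>x. p < x \<and> x < p + 1 \<and> z = circ x"
proof -
  obtain y where y: "z = circ y" using circle_obtain assms(1) by blast
  define x where "x = y - of_int \<lfloor>y - p\<rfloor>"
  have x1: "p \<le> x" "x < p + 1" unfolding x_def by linarith+
  have cx: "circ x = z" unfolding x_def y by (simp add: circ_eq_iff)
  have "x \<noteq> p" using cx assms(2) by auto
  then show ?thesis using x1 cx by (intro exI[of _ x]) auto
qed

lemma lift_from_aux:
  assumes "p < x" "x < p + 1"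
  shows "circ x * circ (1/2 - p) = cis (2*pi*(x - p - 1/2))"
    and "-pi < 2*pi*(x - p - 1/2)" "2*pi*(x - p - 1/2) < pi"
proof -
  have "circ x * circ (1/2 - p) = circ (x - p - 1/2 + 1)"
    by (simp add: circ_add[symmetric] algebra_simps)
  also have "\<dots> = circ (x - p - 1/2)" by (simp add: circ_eq_iff)
  finally show "circ x * circ (1/2 - p) = cis (2*pi*(x - p - 1/2))" by (simp add: circ_def)
  have a: "pi * (2*(x - p - 1/2) + 1) > 0" using assms by (intro mult_pos_pos) auto
  have b: "pi * (1 - 2*(x - p - 1/2)) > 0" using assms by (intro mult_pos_pos) auto
  show "-pi < 2*pi*(x - p - 1/2)" using a by (simp add: algebra_simps)
  show "2*pi*(x - p - 1/2) < pi" using b by (simp add: algebra_simps)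
qed

lemma lift_from_circ:
  assumes "p < x" "x < p + 1"
  shows "lift_from p (circ x) = x"
proof -
  have "Arg (circ x * circ (1/2 - p)) = 2*pi*(x - p - 1/2)"
    using lift_from_aux[OF assms] by (simp add: Arg_cis)
  then show ?thesis unfolding lift_from_def by simp
qed

lemma circ_lift_from:
  assumes "z \<in> circle" "z \<noteq> circ p"
  shows "circ (lift_from p z) = z"
  using circle_lift_from[OF assms] lift_from_circ by auto

lemma cis_not_nonpos: "-pi < s \<Longrightarrow> s < pi \<Longrightarrow> cis s \<notin> \<real>\<^sub>\<le>\<^sub>0"
proof
  assume s: "-pi < s" "s < pi" and h: "cis s \<in> \<real>\<^sub>\<le>\<^sub>0"
  then have "sin s = 0" "cos s \<le> 0" by (auto simp: complex_nonpos_Reals_iff)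
  then have "s = 0" using sin_eq_0_pi s by blast
  then show False using \<open>cos s \<le> 0\<close> by simp
qed

lemma lift_from_cont: "continuous_on (circle - {circ p}) (lift_from p)"
proof -
  have "isCont (lift_from p) z" if z: "z \<in> circle - {circ p}" for z
  proof -
    obtain x where x: "p < x" "x < p + 1" "z = circ x" using circle_lift_from z by blast
    have "z * circ (1/2 - p) \<notin> \<real>\<^sub>\<le>\<^sub>0"
      using lift_from_aux[OF x(1,2)] cis_not_nonpos x(3) by simp
    then have "isCont Arg (z * circ (1/2 - p))" by (rule continuous_at_Arg)
    then have "isCont (\<lambda>z. Arg (z * circ (1/2 - p))) z"
      by (intro continuous_at_compose[of _ "\<lambda>z. z * circ (1/2 - p)" Arg, unfolded o_def])
         (auto intro: continuous_intros)
    then show ?thesis unfolding lift_from_def by (intro continuous_intros) auto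
  qed
  then show ?thesis by (intro continuous_at_imp_continuous_on) blast
qed

text \<open>Continuous degree-one maps of the line induce continuous circle maps: in the chart
  slit at \<open>circ p\<close> the induced map is \<open>circ \<circ> \<Psi> \<circ> lift_from p\<close>, and two charts cover.\<close>
lemma induced_cont:
  assumes c: "continuous_on UNIV \<Psi>" and p: "\<And>x. \<Psi> (x + 1) = \<Psi> x + (1::real)"
  shows "continuous_on circle (induced \<Psi>)"
proof -
  have chart: "continuous_on (circle - {circ p}) (induced \<Psi>)" for p
  proof (rule continuous_on_eq)
    show "continuous_on (circle - {circ p}) (circ \<circ> \<Psi> \<circ> lift_from p)"
      by (intro continuous_on_compose lift_from_cont continuous_circ
          continuous_on_subset[OF c subset_UNIV])
    show "(circ \<circ> \<Psi> \<circ> lift_from p) z = induced \<Psi> z" if "z \<in> circle - {circ p}" for z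
      using induced_circ[of \<Psi>, OF p, of "lift_from p z"] circ_lift_from[of z p] that by auto
  qed
  have cover: "(circle - {circ 0}) \<union> (circle - {circ (1/2)}) = circle"
    using circ_half by (auto simp: circ_def)
  have open_chart: "openin (top_of_set circle) (circle - {circ p})" for p
    by (rule openin_delete) simp
  show ?thesis
    using continuous_on_Un_local_open[OF _ _ chart chart] open_chart cover by metis
qed

section \<open>Circle homeomorphisms, rotation numbers, conjugacy to rotations\<close>

text \<open>A monotone surjection of the line has no jumps, hence is continuous.\<close>
lemma mono_surj_cont:
  fixes f :: "real \<Rightarrow> real"
  assumes m: "mono f" and s: "surj f"
  shows "continuous_on UNIV f"
  unfolding continuous_on_iff
proof (intro ballI allI impI)
  fix x e :: real assume e: "e > 0"
  obtain a b where a: "f a = f x - e/2" and b: "f b = f x + e/2" using s by (metis surjD)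
  have "a < x"
  proof (rule ccontr)
    assume "\<not> a < x" then have "f x \<le> f a" using m by (simp add: monoD)
    then show False using a e by simp
  qed
  have "x < b"
  proof (rule ccontr)
    assume "\<not> x < b" then have "f b \<le> f x" using m by (simp add: monoD)
    then show False using b e by simp
  qed
  show "\<exists>d>0. \<forall>x'\<in>UNIV. dist x' x < d \<longrightarrow> dist (f x') (f x) < e"
  proof (intro exI[of _ "min (x - a) (b - x)"] conjI ballI impI)
    show "0 < min (x - a) (b - x)" using \<open>a < x\<close> \<open>x < b\<close> by simp
    fix x' assume "dist x' x < min (x - a) (b - x)"
    then have "a \<le> x'" "x' \<le> b" by (auto simp: dist_real_def)
    then have "f a \<le> f x'" "f x' \<le> f b" using m by (auto simp: monoD)
    then show "dist (f x') (f x) < e" using a b e by (auto simp: dist_real_def)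
  qed
qed

lemma inv_lift:
  fixes F :: "real \<Rightarrow> real"
  assumes sm: "strict_mono F" and su: "surj F" and p: "\<And>x. F (x + 1) = F x + 1"
  shows "strict_mono (inv F)" "surj (inv F)" "inv F (x + 1) = inv F x + 1"
proof -
  have fi: "F (inv F x) = x" for x using su by (simp add: surj_f_inv_f)
  have if1: "inv F (F x) = x" for x using strict_mono_imp_inj_on[OF sm] by simp
  show "strict_mono (inv F)"
    by (rule strict_monoI) (metis fi sm strict_mono_less_eq not_less)
  show "surj (inv F)" using if1 by (metis surjI)
  have "F (inv F x + 1) = x + 1" using p fi by simp
  then show "inv F (x + 1) = inv F x + 1" using if1 by metis
qed

lemma homeo_induced:
  fixes F :: "real \<Rightarrow> real"
  assumes sm: "strict_mono F" and su: "surj F" and p: "\<And>x. F (x + 1) = F x + 1"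
  shows "homeomorphism circle circle (induced F) (induced (inv F))"
proof -
  note inv = inv_lift[OF sm su p]
  have fi: "F (inv F x) = x" for x using su by (simp add: surj_f_inv_f)
  have if1: "inv F (F x) = x" for x using strict_mono_imp_inj_on[OF sm] by simp
  have gf: "induced (inv F) (induced F z) = z" if "z \<in> circle" for z
  proof -
    obtain x where "z = circ x" using \<open>z \<in> circle\<close> circle_obtain by blast
    then show ?thesis using induced_circ[of F, OF p] induced_circ[of "inv F", OF inv(3)] if1 by simp
  qed
  have fg: "induced F (induced (inv F) z) = z" if "z \<in> circle" for z
  proof -
    obtain x where "z = circ x" using \<open>z \<in> circle\<close> circle_obtain by blast
    then show ?thesis using induced_circ[of F, OF p] induced_circ[of "inv F", OF inv(3)] fi by simp
  qed
  have "induced F ` circle = circle"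
  proof (intro subset_antisym subsetI)
    fix z assume "z \<in> circle"
    then show "z \<in> induced F ` circle" using fg by (metis image_eqI induced_in_circle)
  qed auto
  moreover have "induced (inv F) ` circle = circle"
  proof (intro subset_antisym subsetI)
    fix z assume "z \<in> circle"
    then show "z \<in> induced (inv F) ` circle" using gf by (metis image_eqI induced_in_circle)
  qed auto
  moreover have "continuous_on circle (induced F)"
    using induced_cont[OF mono_surj_cont[OF strict_mono_mono[OF sm] su]] p by blast
  moreover have "continuous_on circle (induced (inv F))"
    using induced_cont[OF mono_surj_cont[OF strict_mono_mono[OF inv(1)] inv(2)]] inv(3) by blast
  ultimately show ?thesis unfolding homeomorphism_def using gf fg by blast
qed

lemma lift_iter:
  assumes "lift_of F f"
  shows "(f ^^ k) (circ x) = circ ((F ^^ k) x)"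
  using assms by (induction k) (auto simp: lift_of_def)

lemma lift_unique:
  assumes "lift_of F f" "lift_of F' f"
  obtains k where "k \<in> \<int>" "\<And>x. F' x = F x + k"
proof -
  define D where "D x = F' x - F x" for x
  have DZ: "D x \<in> \<int>" for x
    using assms circ_eq_iff unfolding D_def lift_of_def by metis
  have "D constant_on UNIV"
  proof (rule continuous_discrete_range_constant)
    show "continuous_on UNIV D"
      using assms unfolding D_def lift_of_def by (intro continuous_intros) auto
    fix x
    show "\<exists>e>0. \<forall>y. y \<in> UNIV \<and> D y \<noteq> D x \<longrightarrow> e \<le> norm (D y - D x)"
    proof (intro exI[of _ 1] conjI allI impI)
      fix y assume "y \<in> UNIV \<and> D y \<noteq> D x"
      then show "1 \<le> norm (D y - D x)" using Ints_nonzero_abs_ge1[of "D y - D x"] DZ by auto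
    qed simp
  qed simp
  then obtain k where "\<And>x. D x = k" unfolding constant_on_def by blast
  then show ?thesis using that DZ unfolding D_def by (metis add_diff_cancel_left' diff_add_cancel)
qed

lemma rot_number_eqI:
  assumes L: "lift_of F f" "strict_mono F" and lim: "(\<lambda>n. (F ^^ n) 0 / real n) \<longlonglongrightarrow> t"
  shows "rot_number f = circ t"
proof -
  define F' where "F' = (SOME F'. lift_of F' f \<and> strict_mono F')"
  have "lift_of F' f" unfolding F'_def by (rule someI2[of _ F]) (use L in auto)
  then obtain k where k: "k \<in> \<int>" "\<And>x. F' x = F x + k" using lift_unique[OF L(1)] by metis
  have Fk: "F (x + real n * k) = F x + real n * k" for x n
    using lift_Ints[of F] L(1) k(1) unfolding lift_of_def by (simp add: Ints_mult)
  have it: "(F' ^^ n) x = (F ^^ n) x + real n * k" for n x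
  proof (induction n)
    case (Suc n)
    have "F ((F ^^ n) x + real n * k) = F ((F ^^ n) x) + real n * k" by (rule Fk)
    then show ?case using Suc by (simp add: k(2) algebra_simps)
  qed simp
  have "(\<lambda>n. (F ^^ n) 0 / real n + k) \<longlonglongrightarrow> t + k" by (intro tendsto_intros lim)
  moreover have "\<forall>\<^sub>F n in sequentially. (F ^^ n) 0 / real n + k = (F' ^^ n) 0 / real n"
    by (rule eventually_sequentiallyI[of 1]) (simp add: it field_simps)
  ultimately have "(\<lambda>n. (F' ^^ n) 0 / real n) \<longlonglongrightarrow> t + k" by (rule Lim_transform_eventually)
  then have "rot_number f = circ (t + k)"
    unfolding rot_number_def Let_def F'_def[symmetric] by (simp add: limI)
  also have "\<dots> = circ t" using k(1) by (simp add: circ_eq_iff)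
  finally show ?thesis .
qed

lemma dense_orbit:
  assumes "t \<notin> \<rat>" "u < v"
  shows "\<exists>k::nat. \<exists>p::int. u < b + real k * t - of_int p \<and> b + real k * t - of_int p < v"
proof -
  have e: "(v-u)/2 > 0" using assms(2) by simp
  obtain h k where k: "k > 0" "\<bar>of_int k * t - of_int h - ((u+v)/2 - b)\<bar> < (v-u)/2"
    by (rule sequence_of_fractional_parts_is_dense[OF assms(1) e])
  have nk: "real (nat k) = of_int k" using k by simp
  from k(2) have "- ((v-u)/2) < of_int k * t - of_int h - ((u+v)/2 - b)"
    "of_int k * t - of_int h - ((u+v)/2 - b) < (v-u)/2"
    by linarith+
  then have "u < b + real (nat k) * t - of_int h \<and> b + real (nat k) * t - of_int h < v"
    unfolding nk by (simp add: field_simps)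
  then show ?thesis by blast
qed

lemma conj_iter:
  assumes conj: "\<forall>z\<in>circle. h (f z) = rot \<eta> (h z)" and f: "f ` circle \<subseteq> circle"
    and z: "z \<in> circle"
  shows "h ((f ^^ k) z) = circ (real k * \<eta>) * h z"
proof (induction k)
  case 0 then show ?case by (simp add: circ_def)
next
  case (Suc k)
  have orbit: "(f ^^ n) z \<in> circle" for n by (induction n) (use z f in auto)
  then have "h ((f ^^ Suc k) z) = circ \<eta> * (circ (real k * \<eta>) * h z)"
    using conj Suc orbit[of k] by (simp add: rot_def)
  also have "\<dots> = circ (real (Suc k) * \<eta>) * h z" by (simp add: circ_add[symmetric] algebra_simps)
  finally show ?case .
qed

lemma conj_rational_periodic:
  assumes hh: "homeomorphism circle circle h h'" and conj: "\<forall>z\<in>circle. h (f z) = rot \<eta> (h z)"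
    and f: "f ` circle \<subseteq> circle" and rat: "\<eta> \<in> \<rat>"
  obtains q where "q > 0" "\<And>z. z \<in> circle \<Longrightarrow> (f ^^ q) z = z"
proof -
  obtain a b where ab: "b > 0" "\<eta> = of_int a / of_int b" using rat by (auto elim: Rats_cases')
  have q: "real (nat b) * \<eta> \<in> \<int>" using ab by simp
  have per: "(f ^^ nat b) z = z" if z: "z \<in> circle" for z
  proof -
    have orbit: "(f ^^ n) z \<in> circle" for n by (induction n) (use z f in auto)
    have "(f ^^ nat b) z \<in> circle" by (rule orbit)
    moreover have "h ((f ^^ nat b) z) = h z"
      using conj_iter[OF conj f z] q by (simp add: circ_eq_1_iff)
    ultimately show ?thesis using hh z unfolding homeomorphism_def by metis
  qed
  show ?thesis by (rule that[of "nat b"]) (use ab(1) per in auto)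
qed

lemma conj_irrational_minimal:
  assumes hh: "homeomorphism circle circle h h'" and conj: "\<forall>z\<in>circle. h (f z) = rot \<eta> (h z)"
    and f: "f ` circle \<subseteq> circle" and irr: "\<eta> \<notin> \<rat>"
    and K: "K \<noteq> {}" "closed K" "K \<subseteq> circle" "f ` K \<subseteq> K"
  shows "K = circle"
proof -
  have hcont: "continuous_on circle h" and hinv: "\<And>z. z \<in> circle \<Longrightarrow> h' (h z) = z"
    and himg: "h ` circle = circle" using hh unfolding homeomorphism_def by auto
  have "compact K"
    using K compact_sphere closed_Int_compact[of K "sphere 0 1"] by (simp add: circle_def Int_absorb2)
  then have hK: "closed (h ` K)"
    by (intro compact_imp_closed compact_continuous_image continuous_on_subset[OF hcont K(3)])
  obtain z0 where z0: "z0 \<in> K" using K by auto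
  obtain b where b: "h z0 = circ b" using himg z0 K(3) circle_obtain by blast
  have orbit: "(f ^^ k) z0 \<in> K" for k by (induction k) (use z0 K in auto)
  have "w \<in> h ` K" if w: "w \<in> circle" for w
  proof -
    obtain c where c: "w = circ c" using w circle_obtain by blast
    have "\<exists>y\<in>h ` K. dist y w < e" if e: "e > 0" for e
    proof -
      obtain \<delta> where d: "\<delta> > 0" "\<forall>x. \<bar>x - c\<bar> < \<delta> \<longrightarrow> dist (circ x) (circ c) < e"
        using circ_near[OF e] by blast
      obtain k p where kp: "c - \<delta> < b + real k * \<eta> - of_int p" "b + real k * \<eta> - of_int p < c + \<delta>"
        using dense_orbit[OF irr, of "c - \<delta>" "c + \<delta>" b] d(1) by auto
      have "circ (b + real k * \<eta> - of_int p) = circ (real k * \<eta>) * h z0"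
        by (simp add: b circ_add[symmetric] circ_eq_iff add.commute)
      also have "\<dots> = h ((f ^^ k) z0)" using conj_iter[OF conj f] z0 K(3) by auto
      finally have "circ (b + real k * \<eta> - of_int p) \<in> h ` K" using orbit by auto
      moreover have "\<bar>(b + real k * \<eta> - of_int p) - c\<bar> < \<delta>" using kp by linarith
      then have "dist (circ (b + real k * \<eta> - of_int p)) w < e" using d(2) c by simp
      ultimately show ?thesis by blast
    qed
    then show ?thesis using hK closed_approachable by blast
  qed
  then have "z \<in> K" if z: "z \<in> circle" for z
  proof -
    obtain c where "c \<in> K" "h z = h c" using \<open>\<And>w. w \<in> circle \<Longrightarrow> w \<in> h ` K\<close> himg z by blast
    then show ?thesis using hinv z K(3) by (metis subsetD)
  qed
  then show ?thesis using K(3) by blast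
qed

lemma not_conj_to_rotation:
  assumes f: "f ` circle \<subseteq> circle"
    and aperiodic: "\<And>q. q > 0 \<Longrightarrow> \<exists>z\<in>circle. (f ^^ q) z \<noteq> z"
    and K: "K \<noteq> {}" "closed K" "K \<subseteq> circle" "f ` K \<subseteq> K" "K \<noteq> circle"
  shows "\<not> conj_to_rotation f"
proof
  assume "conj_to_rotation f"
  then obtain h h' \<eta> where hh: "homeomorphism circle circle h h'"
    and conj: "\<forall>z\<in>circle. h (f z) = rot \<eta> (h z)" unfolding conj_to_rotation_def by blast
  show False
  proof (cases "\<eta> \<in> \<rat>")
    case True
    then show False using conj_rational_periodic[OF hh conj f] aperiodic by metis
  next
    case False
    then show False using conj_irrational_minimal[OF hh conj f False] K by blast
  qed
qed

section \<open>The marked points\<close>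

text \<open>The lift to the line of the two orbits \<open>\<phi> + n\<tau>\<close> and \<open>\<phi> + 1/2 + n\<tau>\<close>; these are the
  points at which the rotation is blown up.\<close>
definition marked :: "real \<Rightarrow> real \<Rightarrow> real set" where
  "marked t p = {p + of_int n * t + of_int m / 2 | n m. True}"

lemma marked_tau: "y \<in> marked t p \<longleftrightarrow> y + t \<in> marked t p"
proof
  assume "y \<in> marked t p"
  then obtain n m where "y = p + of_int n * t + of_int m / 2" unfolding marked_def by auto
  then have "y + t = p + of_int (n+1) * t + of_int m / 2" by (simp add: algebra_simps)
  then show "y + t \<in> marked t p" unfolding marked_def by blast
next
  assume "y + t \<in> marked t p"
  then obtain n m where "y + t = p + of_int n * t + of_int m / 2" unfolding marked_def by auto
  then have "y = p + of_int (n-1) * t + of_int m / 2" by (simp add: algebra_simps)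
  then show "y \<in> marked t p" unfolding marked_def by blast
qed

lemma marked_circ:
  "circ ` marked t p = {circ (p + of_int n * t) | n. True} \<union> {circ ((p + 1/2) + of_int n * t) | n. True}"
proof
  show "circ ` marked t p \<subseteq> {circ (p + of_int n * t) | n. True} \<union> {circ ((p + 1/2) + of_int n * t) | n. True}"
  proof
    fix z assume "z \<in> circ ` marked t p"
    then obtain n m where z: "z = circ (p + of_int n * t + of_int m / 2)" unfolding marked_def by auto
    have "real_of_int m = of_int (m mod 2) + of_int (m div 2) * 2"
      by (metis mult.commute mod_div_mult_eq of_int_add of_int_mult of_int_numeral)
    then have z2: "z = circ (p + of_int n * t + of_int (m mod 2) / 2)" unfolding z circ_eq_iff
      by (simp add: field_simps)
    have "m mod 2 = 0 \<or> m mod 2 = 1" by auto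
    then show "z \<in> {circ (p + of_int n * t) | n. True} \<union> {circ ((p + 1/2) + of_int n * t) | n. True}"
      using z2 by (auto simp: algebra_simps)
  qed
next
  show "{circ (p + of_int n * t) | n. True} \<union> {circ ((p + 1/2) + of_int n * t) | n. True} \<subseteq> circ ` marked t p"
  proof
    fix z assume "z \<in> {circ (p + of_int n * t) | n. True} \<union> {circ ((p + 1/2) + of_int n * t) | n. True}"
    then obtain n where "z = circ (p + of_int n * t + of_int 0 / 2) \<or> z = circ (p + of_int n * t + of_int 1 / 2)"
      by (auto simp: algebra_simps)
    then show "z \<in> circ ` marked t p" unfolding marked_def by blast
  qed
qed

lemma marked_dense:
  assumes "t \<notin> \<rat>" "u < v"
  shows "\<exists>m \<in> marked t p. u < m \<and> m < v"
proof -
  obtain k q where kq: "u < p + real k * t - of_int q" "p + real k * t - of_int q < v"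
    using dense_orbit[OF assms] by blast
  have "p + real k * t - of_int q = p + of_int (int k) * t + of_int (-2*q) / 2" by simp
  then show ?thesis using kq unfolding marked_def by blast
qed

section \<open>The blow-up of an irrational rotation\<close>

locale denjoy_blowup =
  fixes G J :: "real \<Rightarrow> real" and \<tau> \<phi> :: real
  assumes irrational: "\<tau> \<notin> \<rat>"
    and J_nonneg: "0 \<le> J y"
    and fibres_ordered: "z < y \<Longrightarrow> G z + J z < G y"
    and fibres_cover: "\<exists>y. G y \<le> x \<and> x \<le> G y + J y"
    and G_half: "G (y + 1/2) = G y + 1/2"
    and J_half: "J (y + 1/2) = J y"
    and J_pos_iff: "0 < J y \<longleftrightarrow> y \<in> marked \<tau> \<phi>"
begin

definition Gr where "Gr y = G y + J y"

lemma G_le_Gr: "G y \<le> Gr y"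
  using J_nonneg unfolding Gr_def by simp

lemma Gr_less: "z < y \<Longrightarrow> Gr z < G y"
  using fibres_ordered unfolding Gr_def by simp

lemma Gr_half: "Gr (y + 1/2) = Gr y + 1/2"
  unfolding Gr_def by (simp add: G_half J_half)

lemma degenerate_fibre: "\<not> 0 < J y \<Longrightarrow> Gr y = G y"
  using J_nonneg[of y] unfolding Gr_def by simp

lemma J_tau: "0 < J (y + \<tau>) \<longleftrightarrow> 0 < J y"
  using J_pos_iff marked_tau by blast

definition Phi where "Phi x = (THE y. G y \<le> x \<and> x \<le> Gr y)"

lemma fibre_unique: "G y1 \<le> x \<Longrightarrow> x \<le> Gr y1 \<Longrightarrow> G y2 \<le> x \<Longrightarrow> x \<le> Gr y2 \<Longrightarrow> y1 = y2"
  using Gr_less[of y1 y2] Gr_less[of y2 y1] by (cases y1 y2 rule: linorder_cases) auto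

lemma Phi_fibre: "G (Phi x) \<le> x" "x \<le> Gr (Phi x)"
proof -
  obtain y where y: "G y \<le> x" "x \<le> Gr y" using fibres_cover[of x] unfolding Gr_def by auto
  have "G (Phi x) \<le> x \<and> x \<le> Gr (Phi x)"
    unfolding Phi_def by (rule theI[of _ y]) (use y fibre_unique in blast)+
  then show "G (Phi x) \<le> x" "x \<le> Gr (Phi x)" by auto
qed

lemma Phi_eqI: "G y \<le> x \<Longrightarrow> x \<le> Gr y \<Longrightarrow> Phi x = y"
  using Phi_fibre fibre_unique by blast

lemma Phi_G [simp]: "Phi (G y) = y" by (rule Phi_eqI) (auto simp: G_le_Gr)
lemma Phi_Gr [simp]: "Phi (Gr y) = y" by (rule Phi_eqI) (auto simp: G_le_Gr)

lemma Phi_mono_le: "x \<le> x' \<Longrightarrow> Phi x \<le> Phi x'"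
proof (rule ccontr)
  assume "x \<le> x'" "\<not> Phi x \<le> Phi x'"
  then have "Gr (Phi x') < G (Phi x)" by (intro Gr_less) auto
  then show False using Phi_fibre[of x] Phi_fibre[of x'] \<open>x \<le> x'\<close> by linarith
qed

lemma Phi_mono: "mono Phi" by (auto intro: monoI Phi_mono_le)

lemma Phi_cont: "continuous_on UNIV Phi"
  by (rule mono_surj_cont[OF Phi_mono]) (metis Phi_G surjI)

lemma Phi_half: "Phi (x + 1/2) = Phi x + 1/2"
  by (rule Phi_eqI) (use Phi_fibre[of x] in \<open>auto simp: G_half Gr_half\<close>)

lemma Phi_one: "Phi (x + 1) = Phi x + 1"
  using Phi_half[of x] Phi_half[of "x + 1/2"] by (simp add: add.commute)

lemma Phi_int: "Phi (x + of_int m) = Phi x + of_int m"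
  by (rule lift_int) (simp add: Phi_one)

lemma in_degenerate_fibre: "G y \<le> x \<Longrightarrow> x \<le> Gr y \<Longrightarrow> \<not> 0 < J y \<Longrightarrow> x = G y"
  using degenerate_fibre[of y] by simp

text \<open>The lift of the Denjoy map sends the fibre of \<open>y\<close> affinely onto the fibre of
  \<open>y + \<tau>\<close>; \<open>slope y\<close> is the ratio of their lengths.\<close>
definition slope where "slope y = (if 0 < J y then J (y + \<tau>) / J y else 0)"

definition F where "F x = G (Phi x + \<tau>) + slope (Phi x) * (x - G (Phi x))"

lemma slope_pos: "0 < J y \<Longrightarrow> 0 < slope y"
  unfolding slope_def using J_tau by auto

lemma F_in_fibre: "G (Phi x + \<tau>) \<le> F x" "F x \<le> Gr (Phi x + \<tau>)"
proof -
  let ?y = "Phi x"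
  show "G (?y + \<tau>) \<le> F x"
    unfolding F_def slope_def using Phi_fibre[of x] J_nonneg[of "?y + \<tau>"]
    by (auto intro!: mult_nonneg_nonneg divide_nonneg_pos)
  show "F x \<le> Gr (?y + \<tau>)"
  proof (cases "0 < J ?y")
    case True
    have "x - G ?y \<le> J ?y" using Phi_fibre[of x] unfolding Gr_def by simp
    then have "J (?y + \<tau>) / J ?y * (x - G ?y) \<le> J (?y + \<tau>) / J ?y * J ?y"
      using J_nonneg[of "?y+\<tau>"] True by (intro mult_left_mono) auto
    then show ?thesis unfolding F_def slope_def Gr_def using True by simp
  next
    case False
    then show ?thesis unfolding F_def slope_def using G_le_Gr by simp
  qed
qed

lemma Phi_F: "Phi (F x) = Phi x + \<tau>"
  using F_in_fibre by (rule Phi_eqI)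

lemma F_G: "F (G y) = G (y + \<tau>)" unfolding F_def by simp

lemma F_Gr: "F (Gr y) = Gr (y + \<tau>)"
proof (cases "0 < J y")
  case True
  have "F (Gr y) = G (y + \<tau>) + slope y * (Gr y - G y)" unfolding F_def by simp
  then show ?thesis using True unfolding slope_def Gr_def by simp
next
  case False
  then have "\<not> 0 < J (y + \<tau>)" using J_tau by simp
  then show ?thesis using False degenerate_fibre F_G by simp
qed

lemma F_strict: "strict_mono F"
proof (rule strict_monoI)
  fix x x' :: real assume xx: "x < x'"
  show "F x < F x'"
  proof (cases "Phi x = Phi x'")
    case True
    let ?y = "Phi x"
    have "0 < J ?y"
      using xx Phi_fibre[of x] Phi_fibre[of x'] True in_degenerate_fibre by (metis less_irrefl)
    then have "0 < slope ?y" by (rule slope_pos)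
    then show ?thesis unfolding F_def using True xx by simp
  next
    case False
    then have "Phi x + \<tau> < Phi x' + \<tau>" using xx Phi_mono_le[of x x'] by simp
    then have "Gr (Phi x + \<tau>) < G (Phi x' + \<tau>)" by (rule Gr_less)
    then show ?thesis using F_in_fibre[of x] F_in_fibre[of x'] by linarith
  qed
qed

text \<open>\<open>F\<close> is onto: the fibre of \<open>y + \<tau>\<close> is the image of the fibre of \<open>y\<close>.\<close>
lemma F_surj: "surj F"
proof -
  have "\<exists>x. F x = x'" for x'
  proof -
    let ?y' = "Phi x'" let ?y = "Phi x' - \<tau>"
    have yy: "?y + \<tau> = ?y'" by simp
    show ?thesis
    proof (cases "0 < J ?y")
      case False
      then have "\<not> 0 < J ?y'" using J_tau[of ?y] by simp
      then have "x' = G ?y'" using Phi_fibre[of x'] in_degenerate_fibre by blast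
      then show ?thesis using F_G[of ?y] by auto
    next
      case True
      define x where "x = G ?y + (x' - G ?y') / slope ?y"
      have r: "slope ?y = J ?y' / J ?y" unfolding slope_def using True by simp
      have r0: "0 < slope ?y" using slope_pos[OF True] .
      have a: "G ?y \<le> x" unfolding x_def using Phi_fibre[of x'] r0 by simp
      have "(x' - G ?y') / slope ?y \<le> J ?y' / slope ?y"
        using Phi_fibre[of x'] r0 unfolding Gr_def by (intro divide_right_mono) auto
      also have "\<dots> = J ?y" using r True r0 by (simp add: field_simps)
      finally have b: "x \<le> Gr ?y" unfolding x_def Gr_def by simp
      have "Phi x = ?y" using a b by (rule Phi_eqI)
      then have "F x = G ?y' + slope ?y * ((x' - G ?y') / slope ?y)"
        unfolding F_def x_def by simp
      then show ?thesis using r0 by auto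
    qed
  qed
  then show ?thesis by (metis surjI)
qed

lemma F_half: "F (x + 1/2) = F x + 1/2"
proof -
  have "slope (y + 1/2) = slope y" for y
    unfolding slope_def using J_half[of y] J_half[of "y + \<tau>"] by (simp add: ac_simps)
  moreover have "G (Phi x + 1/2 + \<tau>) = G (Phi x + \<tau>) + 1/2"
    using G_half[of "Phi x + \<tau>"] by (simp add: ac_simps)
  ultimately show ?thesis unfolding F_def Phi_half using G_half[of "Phi x"] by (simp add: algebra_simps)
qed

lemma F_one: "F (x + 1) = F x + 1"
  using F_half[of x] F_half[of "x + 1/2"] by (simp add: add.commute)

lemma F_cont: "continuous_on UNIV F"
  by (rule mono_surj_cont[OF strict_mono_mono[OF F_strict] F_surj])

definition Clift where "Clift = {x. \<forall>y. \<not> (G y < x \<and> x < Gr y)}"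

lemma Clift_iff: "x \<in> Clift \<longleftrightarrow> x = G (Phi x) \<or> x = Gr (Phi x)"
proof
  assume "x \<in> Clift"
  then have "\<not> (G (Phi x) < x \<and> x < Gr (Phi x))" unfolding Clift_def by blast
  then show "x = G (Phi x) \<or> x = Gr (Phi x)" using Phi_fibre[of x] by linarith
next
  assume h: "x = G (Phi x) \<or> x = Gr (Phi x)"
  show "x \<in> Clift" unfolding Clift_def
  proof (intro CollectI allI notI)
    fix y assume y: "G y < x \<and> x < Gr y"
    then have "Phi x = y" by (intro Phi_eqI) auto
    then show False using h y by auto
  qed
qed

lemma G_Clift: "G y \<in> Clift" by (simp add: Clift_iff)

lemma Clift_closed: "closed Clift"
proof -
  have "Clift = - (\<Union>y. {G y <..< Gr y})" unfolding Clift_def by auto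
  then show ?thesis by (auto intro!: closed_Compl open_UN)
qed

lemma Clift_half: "x + 1/2 \<in> Clift \<longleftrightarrow> x \<in> Clift"
  unfolding Clift_iff Phi_half G_half Gr_half by auto

lemma Clift_Ints: "k \<in> \<int> \<Longrightarrow> x + k \<in> Clift \<longleftrightarrow> x \<in> Clift"
proof -
  have "x + 1 \<in> Clift \<longleftrightarrow> x \<in> Clift" for x
    using Clift_half[of x] Clift_half[of "x + 1/2"] by (simp add: add.commute)
  then show "k \<in> \<int> \<Longrightarrow> x + k \<in> Clift \<longleftrightarrow> x \<in> Clift"
    using int_periodic[of "\<lambda>x. x \<in> Clift"] by (auto elim!: Ints_cases)
qed

lemma F_Clift: "x \<in> Clift \<Longrightarrow> F x \<in> Clift"
  unfolding Clift_iff using F_G F_Gr Phi_F by metis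

definition C where "C = circ ` Clift"

lemma circ_in_C: "circ x \<in> C \<longleftrightarrow> x \<in> Clift"
proof
  assume "circ x \<in> C"
  then obtain c where c: "c \<in> Clift" "circ x = circ c" unfolding C_def by auto
  then have "x - c \<in> \<int>" using circ_eq_iff by blast
  then show "x \<in> Clift" using Clift_Ints[of "x - c" c] c(1) by simp
qed (auto simp: C_def)

lemma C_sub: "C \<subseteq> circle" unfolding C_def by auto

lemma C_compact: "compact C"
proof -
  have "C = circ ` (Clift \<inter> {0..1})"
  proof
    show "C \<subseteq> circ ` (Clift \<inter> {0..1})"
    proof
      fix z assume "z \<in> C"
      then obtain c where c: "c \<in> Clift" "z = circ c" unfolding C_def by auto
      have "c - of_int \<lfloor>c\<rfloor> \<in> Clift" using Clift_Ints[of "- of_int \<lfloor>c\<rfloor>" c] c(1) by simp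
      moreover have "circ (c - of_int \<lfloor>c\<rfloor>) = z" using c(2) by (simp add: circ_eq_iff)
      moreover have "c - of_int \<lfloor>c\<rfloor> \<in> {0..1}" by simp linarith
      ultimately show "z \<in> circ ` (Clift \<inter> {0..1})" by blast
    qed
  qed (auto simp: C_def)
  moreover have "compact (Clift \<inter> {0..1})" by (intro closed_Int_compact Clift_closed) auto
  ultimately show ?thesis using compact_continuous_image[OF continuous_circ] by metis
qed

lemma C_closed: "closed C" using C_compact compact_imp_closed by blast

lemma C_half: "rot (1/2) ` C = C"
proof
  show "rot (1/2) ` C \<subseteq> C" unfolding C_def by (auto simp: rot_circ circ_in_C[unfolded C_def] Clift_half)
  show "C \<subseteq> rot (1/2) ` C"
  proof
    fix z assume "z \<in> C"
    then obtain c where c: "c \<in> Clift" "z = circ c" unfolding C_def by auto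
    have "c - 1/2 \<in> Clift" using Clift_half[of "c - 1/2"] c(1) by simp
    moreover have "z = rot (1/2) (circ (c - 1/2))" using c by (simp add: rot_circ)
    ultimately show "z \<in> rot (1/2) ` C" unfolding C_def by blast
  qed
qed

abbreviation "f \<equiv> induced F"
abbreviation "P \<equiv> induced Phi"

lemma f_circ: "f (circ x) = circ (F x)" by (rule induced_circ) (simp add: F_one)
lemma P_circ: "P (circ x) = circ (Phi x)" by (rule induced_circ) (simp add: Phi_one)

lemma lift_F: "lift_of F f"
  unfolding lift_of_def using F_cont F_one f_circ by blast

lemma f_C: "f ` C \<subseteq> C" unfolding C_def using f_circ F_Clift by auto

lemma Phi_iter: "Phi ((F ^^ k) x) = Phi x + real k * \<tau>"
  by (induction k) (auto simp: Phi_F algebra_simps)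

lemma Phi_localises:
  assumes c: "c \<in> Clift" and d: "\<delta> > 0"
  shows "\<exists>y0 y1. y0 < y1 \<and> (\<forall>x. y0 < Phi x \<and> Phi x < y1 \<longrightarrow> \<bar>x - c\<bar> < \<delta>)"
proof -
  let ?y = "Phi c"
  have l: "Phi (c - \<delta>/2) \<le> ?y" "?y \<le> Phi (c + \<delta>/2)" using d by (auto intro: Phi_mono_le)
  consider "Phi (c - \<delta>/2) < ?y" | "?y < Phi (c + \<delta>/2)"
    | "Phi (c - \<delta>/2) = ?y" "Phi (c + \<delta>/2) = ?y" using l by linarith
  then show ?thesis
  proof cases
    case 1
    have "\<bar>x - c\<bar> < \<delta>" if "Phi (c - \<delta>/2) < Phi x" "Phi x < ?y" for x
      using that Phi_mono_le[of x "c - \<delta>/2"] Phi_mono_le[of c x] d by force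
    then show ?thesis using 1 by blast
  next
    case 2
    have "\<bar>x - c\<bar> < \<delta>" if "?y < Phi x" "Phi x < Phi (c + \<delta>/2)" for x
      using that Phi_mono_le[of "c + \<delta>/2" x] Phi_mono_le[of x c] d by force
    then show ?thesis using 2 by blast
  next
    case 3
    then have "G ?y < c \<and> c < Gr ?y" using Phi_fibre[of "c - \<delta>/2"] Phi_fibre[of "c + \<delta>/2"] d by simp
    then show ?thesis using c unfolding Clift_def by blast
  qed
qed

text \<open>Minimality: the orbit of any point of \<open>C\<close> accumulates at every point of \<open>C\<close>,
  since its \<open>Phi\<close>-values form a dense orbit of the irrational rotation.\<close>
lemma minimal: "minimal_set f C"
  unfolding minimal_set_def
proof (intro conjI allI impI)
  show "C \<noteq> {}" unfolding C_def using G_Clift by blast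
  show "C \<subseteq> circle" "closed C" "f ` C \<subseteq> C" by (fact C_sub C_closed f_C)+
  fix K assume K: "K \<noteq> {} \<and> closed K \<and> K \<subseteq> C \<and> f ` K \<subseteq> K"
  obtain x0 where z0: "circ x0 \<in> K" using K C_sub circle_obtain by blast
  have orbit: "circ ((F ^^ k) x0) \<in> K" for k
    unfolding lift_iter[OF lift_F, symmetric] by (induction k) (use z0 K in auto)
  have "z \<in> K" if "z \<in> C" for z
  proof -
    obtain c where c: "c \<in> Clift" "z = circ c" using \<open>z \<in> C\<close> unfolding C_def by auto
    have "\<exists>y\<in>K. dist y z < e" if e: "e > 0" for e
    proof -
      obtain \<delta> where d: "\<delta> > 0" "\<forall>x. \<bar>x - c\<bar> < \<delta> \<longrightarrow> dist (circ x) (circ c) < e"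
        using circ_near[OF e] by blast
      obtain y0 y1 where y: "y0 < y1" "\<forall>x. y0 < Phi x \<and> Phi x < y1 \<longrightarrow> \<bar>x - c\<bar> < \<delta>"
        using Phi_localises[OF c(1) d(1)] by blast
      obtain k p where kp: "y0 < Phi x0 + real k * \<tau> - of_int p" "Phi x0 + real k * \<tau> - of_int p < y1"
        using dense_orbit[OF irrational y(1)] by blast
      define x where "x = (F ^^ k) x0 + of_int (- p)"
      have "Phi x = Phi x0 + real k * \<tau> - of_int p" unfolding x_def Phi_int Phi_iter by simp
      then have "dist (circ x) z < e" using y(2) kp d c by simp
      moreover have "circ x = circ ((F ^^ k) x0)" unfolding x_def circ_eq_iff by simp
      then have "circ x \<in> K" using orbit[of k] by simp
      ultimately show ?thesis by blast
    qed
    then show ?thesis using K closed_approachable by blast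
  qed
  then show "K = C" using K by blast
qed

text \<open>\<open>C\<close> is perfect: near a point of \<open>C\<close> lie left endpoints of fibres with distinct
  indices, hence distinct points of \<open>C\<close>.\<close>
lemma perfect: "z \<in> C \<Longrightarrow> z islimpt C"
proof -
  assume "z \<in> C"
  then obtain c where c: "c \<in> Clift" "z = circ c" unfolding C_def by auto
  show "z islimpt C" unfolding islimpt_approachable
  proof (intro allI impI)
    fix e :: real assume e: "e > 0"
    obtain \<delta> where d: "\<delta> > 0" "\<forall>x. \<bar>x - c\<bar> < \<delta> \<longrightarrow> dist (circ x) (circ c) < e"
      using circ_near[OF e] by blast
    obtain y0 y1 where y: "y0 < y1" "\<forall>x. y0 < Phi x \<and> Phi x < y1 \<longrightarrow> \<bar>x - c\<bar> < min \<delta> (1/2)"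
      using Phi_localises[OF c(1), of "min \<delta> (1/2)"] d by auto
    define a1 where "a1 = G ((2*y0 + y1)/3)"
    define a2 where "a2 = G ((y0 + 2*y1)/3)"
    have ph: "Phi a1 = (2*y0 + y1)/3" "Phi a2 = (y0 + 2*y1)/3" unfolding a1_def a2_def by simp_all
    then have "a1 \<noteq> a2" using y(1) by auto
    then obtain x where x: "x \<in> {a1, a2}" "x \<noteq> c" by blast
    then have cl: "\<bar>x - c\<bar> < min \<delta> (1/2)" using y ph by auto
    have "x \<in> Clift" using x unfolding a1_def a2_def using G_Clift by auto
    moreover have "circ x \<noteq> z"
    proof
      assume "circ x = z"
      then have "x - c \<in> \<int>" using c circ_eq_iff by simp
      then show False using cl x(2) Ints_nonzero_abs_ge1[of "x - c"] by auto
    qed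
    moreover have "dist (circ x) z < e" using d cl c by simp
    ultimately show "\<exists>x'\<in>C. x' \<noteq> z \<and> dist x' z < e" unfolding C_def by blast
  qed
qed

text \<open>Between any two reals lies a point outside \<open>Clift\<close>: either both lie in one
  fibre, or a marked point, with its open fibre, lies between their indices.\<close>
lemma gap_dense: "u < v \<Longrightarrow> \<exists>p. u < p \<and> p < v \<and> p \<notin> Clift"
proof -
  assume uv: "u < v"
  show ?thesis
  proof (cases "Phi u = Phi v")
    case True
    let ?y = "Phi u"
    have "G ?y < (u+v)/2 \<and> (u+v)/2 < Gr ?y" using Phi_fibre[of u] Phi_fibre[of v] True uv by auto
    then show ?thesis using uv unfolding Clift_def by (intro exI[of _ "(u+v)/2"]) auto
  next
    case False
    then have "Phi u < Phi v" using uv Phi_mono_le[of u v] by simp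
    then obtain m where m: "m \<in> marked \<tau> \<phi>" "Phi u < m" "m < Phi v"
      using marked_dense[OF irrational] by blast
    have "u < G m" using Phi_fibre[of u] Gr_less[of "Phi u" m] m by linarith
    moreover have "Gr m < v" using Phi_fibre[of v] Gr_less[of m "Phi v"] m by linarith
    moreover have gap: "G m < Gr m" using m J_pos_iff unfolding Gr_def by simp
    moreover have "(G m + Gr m)/2 \<notin> Clift"
      unfolding Clift_def mem_Collect_eq not_all not_not using gap by (intro exI[of _ m]) simp
    ultimately show ?thesis by (intro exI[of _ "(G m + Gr m)/2"]) auto
  qed
qed

lemma gap_iff:
  assumes ab: "a < b"
  shows "circ ` {a<..<b} \<inter> C = {} \<longleftrightarrow> Phi a = Phi b"
proof
  assume h: "circ ` {a<..<b} \<inter> C = {}"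
  show "Phi a = Phi b"
  proof (rule ccontr)
    assume "Phi a \<noteq> Phi b"
    then have lt: "Phi a < Phi b" using ab Phi_mono_le[of a b] by simp
    let ?y = "(Phi a + Phi b)/2"
    have "Gr (Phi a) < G ?y" "Gr ?y < G (Phi b)" using lt by (intro Gr_less; simp)+
    then have "a < G ?y" "G ?y < b" using Phi_fibre[of a] Phi_fibre[of b] G_le_Gr[of ?y] by linarith+
    then have "circ (G ?y) \<in> circ ` {a<..<b} \<inter> C" using G_Clift circ_in_C by auto
    then show False using h by blast
  qed
next
  assume e: "Phi a = Phi b"
  have "x \<notin> Clift" if x: "a < x" "x < b" for x
  proof -
    have "G (Phi a) < x \<and> x < Gr (Phi a)" using Phi_fibre[of a] Phi_fibre[of b] e x by auto
    then show ?thesis unfolding Clift_def by blast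
  qed
  then show "circ ` {a<..<b} \<inter> C = {}" using circ_in_C by auto
qed

text \<open>\<open>C\<close> is totally disconnected: two distinct points of a connected subset would,
  in the chart slit at a gap point between them, force another gap point into it.\<close>
lemma tot_disc: "K \<subseteq> C \<Longrightarrow> connected K \<Longrightarrow> \<exists>a. K \<subseteq> {a}"
proof (rule ccontr)
  assume K: "K \<subseteq> C" "connected K" and "\<not> (\<exists>a. K \<subseteq> {a})"
  then obtain z1 z2 where z: "z1 \<in> K" "z2 \<in> K" "z1 \<noteq> z2" by blast
  obtain a where a: "z1 = circ a" using z K C_sub circle_obtain by blast
  have "z2 \<in> circle" using z K C_sub by blast
  then obtain b where b: "a < b" "b < a + 1" "z2 = circ b" using circle_lift_from[of z2 a] z a by blast
  obtain p1 where p1: "a < p1" "p1 < b" "p1 \<notin> Clift" using gap_dense[OF b(1)] by blast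
  obtain p2 where p2: "b < p2" "p2 < a + 1" "p2 \<notin> Clift" using gap_dense[OF b(2)] by blast
  have Ksub: "K \<subseteq> circle - {circ p1}" using K C_sub p1(3) circ_in_C by blast
  have "connected (lift_from p1 ` K)"
    by (rule connected_continuous_image[OF continuous_on_subset[OF lift_from_cont Ksub] K(2)])
  moreover have "lift_from p1 z2 = b" using b p1 by (simp add: lift_from_circ)
  moreover have "lift_from p1 z1 = a + 1"
  proof -
    have "z1 = circ (a + 1)" using a by (simp add: circ_eq_iff)
    then show ?thesis using p1 b by (simp add: lift_from_circ)
  qed
  ultimately have "{b..a+1} \<subseteq> lift_from p1 ` K" using z by (metis connected_contains_Icc imageI)
  then have "p2 \<in> lift_from p1 ` K" using p2 by auto
  then obtain z where zK: "z \<in> K" "lift_from p1 z = p2" by auto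
  then have "circ p2 = z" using circ_lift_from Ksub by blast
  then show False using zK K p2 circ_in_C by auto
qed

lemma cantor: "cantor_set C"
  unfolding cantor_set_def using C_sub C_compact tot_disc perfect by blast

lemma P_identifies_gaps:
  assumes zw: "z \<in> circle" "w \<in> circle"
  shows "P z = P w \<longleftrightarrow> sim_C C z w"
proof
  obtain x x' where x: "z = circ x" and x': "w = circ x'" using zw circle_obtain by blast
  assume "P z = P w"
  then have "Phi x - Phi x' \<in> \<int>" unfolding x x' P_circ circ_eq_iff .
  then obtain m where m: "Phi x - Phi x' = of_int m" by (auto elim: Ints_cases)
  define b where "b = x' + of_int m"
  have pb: "Phi b = Phi x" unfolding b_def Phi_int using m by simp
  have cb: "circ b = w" unfolding b_def x' by (simp add: circ_eq_iff)
  consider "x < b" | "x = b" | "b < x" by linarith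
  then show "sim_C C z w" unfolding sim_C_def gap_arc_def
    using gap_iff[of x b] gap_iff[of b x] pb cb x by cases metis+
next
  have gap: "P u = P v" if "gap_arc C u v" for u v
    using that gap_iff P_circ unfolding gap_arc_def by metis
  assume "sim_C C z w"
  then show "P z = P w" unfolding sim_C_def using gap by metis
qed

lemma P_cantor_function: "cantor_function C P"
  unfolding cantor_function_def cyclic_order_preserving_def
  using induced_cont[OF Phi_cont] Phi_one Phi_mono P_circ P_identifies_gaps by auto

lemma on_circle:
  assumes "z \<in> circle" "\<And>x. Q (circ x)"
  shows "Q z"
  using assms circle_obtain by metis

lemma f_half: "z \<in> circle \<Longrightarrow> f (rot (1/2) z) = rot (1/2) (f z)"
  by (erule on_circle) (simp add: rot_circ f_circ F_half)

lemma P_half: "z \<in> circle \<Longrightarrow> P (rot (1/2) z) = rot (1/2) (P z)"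
  by (erule on_circle) (simp add: rot_circ P_circ Phi_half)

lemma P_f: "z \<in> circle \<Longrightarrow> P (f z) = rot \<tau> (P z)"
  by (erule on_circle) (simp add: rot_circ P_circ f_circ Phi_F)

lemma one_sided_iff:
  assumes c: "c \<in> Clift"
  shows "(\<exists>\<epsilon>>0. Phi c = Phi (c + \<epsilon>) \<or> Phi (c - \<epsilon>) = Phi c) \<longleftrightarrow> 0 < J (Phi c)"
proof
  assume "\<exists>\<epsilon>>0. Phi c = Phi (c + \<epsilon>) \<or> Phi (c - \<epsilon>) = Phi c"
  then obtain e where "e > 0" "Phi c = Phi (c + e) \<or> Phi (c - e) = Phi c" by blast
  then have "G (Phi c) < Gr (Phi c)" using Phi_fibre[of c] Phi_fibre[of "c + e"] Phi_fibre[of "c - e"] by auto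
  then show "0 < J (Phi c)" unfolding Gr_def by simp
next
  let ?y = "Phi c"
  assume J: "0 < J ?y"
  have "c = G ?y \<or> c = Gr ?y" using c Clift_iff by simp
  then have "Phi (c + J ?y) = ?y \<or> Phi (c - J ?y) = ?y"
  proof
    assume "c = G ?y"
    then have "c + J ?y = Gr ?y" unfolding Gr_def by simp
    then show ?thesis by (metis Phi_Gr)
  next
    assume "c = Gr ?y"
    then have "c - J ?y = G ?y" unfolding Gr_def by simp
    then show ?thesis by (metis Phi_G)
  qed
  then show "\<exists>\<epsilon>>0. Phi c = Phi (c + \<epsilon>) \<or> Phi (c - \<epsilon>) = Phi c" using J by metis
qed

lemma P_accessible: "P ` accessible C = circ ` marked \<tau> \<phi>"
proof
  show "P ` accessible C \<subseteq> circ ` marked \<tau> \<phi>"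
  proof
    fix w assume "w \<in> P ` accessible C"
    then obtain a e where ae: "circ a \<in> C" "w = P (circ a)" "e > 0"
      "circ ` {a<..<a+e} \<inter> C = {} \<or> circ ` {a-e<..<a} \<inter> C = {}"
      unfolding accessible_def by blast
    have aC: "a \<in> Clift" using ae circ_in_C by auto
    have "Phi a = Phi (a + e) \<or> Phi (a - e) = Phi a"
      using ae(4) gap_iff[of a "a + e"] gap_iff[of "a - e" a] ae(3) by auto
    then have "Phi a \<in> marked \<tau> \<phi>" using one_sided_iff[OF aC] ae(3) J_pos_iff by blast
    then show "w \<in> circ ` marked \<tau> \<phi>" using ae(2) P_circ by simp
  qed
  show "circ ` marked \<tau> \<phi> \<subseteq> P ` accessible C"
  proof
    fix w assume "w \<in> circ ` marked \<tau> \<phi>"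
    then obtain m where m: "m \<in> marked \<tau> \<phi>" "w = circ m" by auto
    have "0 < J (Phi (G m))" using m J_pos_iff by simp
    then obtain e where e: "e > 0" "Phi (G m) = Phi (G m + e) \<or> Phi (G m - e) = Phi (G m)"
      using one_sided_iff[OF G_Clift] by blast
    have "circ ` {G m<..<G m+e} \<inter> C = {} \<or> circ ` {G m-e<..<G m} \<inter> C = {}"
      using e gap_iff[of "G m" "G m + e"] gap_iff[of "G m - e" "G m"] by auto
    then have "circ (G m) \<in> accessible C"
      unfolding accessible_def using e(1) G_Clift circ_in_C by blast
    moreover have "P (circ (G m)) = w" using m P_circ by simp
    ultimately show "w \<in> P ` accessible C" by blast
  qed
qed

text \<open>\<open>F\<close> has rotation number \<open>\<tau>\<close>: its orbits stay within bounded distance of those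
  of the translation by \<open>\<tau>\<close>, because \<open>Phi\<close> is within bounded distance of the identity.\<close>
lemma Phi_bound: "\<bar>Phi x - x\<bar> \<le> \<bar>Phi 0\<bar> + 1"
proof -
  define r where "r = x - of_int \<lfloor>x\<rfloor>"
  have r: "0 \<le> r" "r \<le> 1" unfolding r_def by linarith+
  have "Phi 0 \<le> Phi r" "Phi r \<le> Phi 0 + 1"
    using r Phi_mono_le[of 0 r] Phi_mono_le[of r 1] Phi_one[of 0] by auto
  moreover have "Phi x - x = Phi r - r" unfolding r_def by (simp add: Phi_int[of _ "- \<lfloor>x\<rfloor>", simplified])
  ultimately show ?thesis using r by linarith
qed

lemma F_rotation_limit: "(\<lambda>n. (F ^^ n) 0 / real n) \<longlonglongrightarrow> \<tau>"
proof -
  define B where "B = 2 * (\<bar>Phi 0\<bar> + 1)"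
  have bnd: "\<bar>(F ^^ n) 0 - real n * \<tau>\<bar> \<le> B" for n
  proof -
    have "(F ^^ n) 0 - real n * \<tau> = Phi 0 - (Phi ((F ^^ n) 0) - (F ^^ n) 0)"
      using Phi_iter[of n 0] by simp
    then have "\<bar>(F ^^ n) 0 - real n * \<tau>\<bar> \<le> \<bar>Phi 0\<bar> + \<bar>Phi ((F ^^ n) 0) - (F ^^ n) 0\<bar>"
      by (metis abs_triangle_ineq4)
    then show ?thesis using Phi_bound[of "(F ^^ n) 0"] abs_ge_zero[of "Phi 0"] unfolding B_def
      by (smt (verit))
  qed
  have "(\<lambda>n. (F ^^ n) 0 / real n - \<tau>) \<longlonglongrightarrow> 0"
  proof (rule Lim_null_comparison)
    show "(\<lambda>n. B / real n) \<longlonglongrightarrow> 0" by (rule lim_const_over_n)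
    show "\<forall>\<^sub>F n in sequentially. norm ((F ^^ n) 0 / real n - \<tau>) \<le> B / real n"
    proof (rule eventually_sequentiallyI[of 1])
      fix n :: nat assume "1 \<le> n"
      then have np: "real n > 0" by simp
      then have "(F ^^ n) 0 / real n - \<tau> = ((F ^^ n) 0 - real n * \<tau>) / real n"
        by (simp add: field_simps)
      then show "norm ((F ^^ n) 0 / real n - \<tau>) \<le> B / real n"
        using bnd[of n] np by (simp add: abs_divide divide_right_mono)
    qed
  qed
  then show ?thesis by (rule LIM_zero_cancel)
qed

text \<open>\<open>f\<close> has no periodic points, since a periodic point would give \<open>q\<tau> \<in> \<int>\<close>.\<close>
lemma f_aperiodic: "q > 0 \<Longrightarrow> (f ^^ q) (circ 0) \<noteq> circ 0"
proof
  assume q: "q > 0" and "(f ^^ q) (circ 0) = circ 0"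
  then have "(F ^^ q) 0 \<in> \<int>" using lift_iter[OF lift_F] circ_eq_iff by simp
  then obtain j where j: "(F ^^ q) 0 = of_int j" by (auto elim: Ints_cases)
  have "real q * \<tau> = of_int j"
    using Phi_iter[of q 0] Phi_int[of 0 j] j by simp
  then have "\<tau> = of_int j / real q" using q by (simp add: field_simps)
  then show False using irrational by simp
qed

text \<open>\<open>C\<close> is a proper subset of the circle: points inside the fibre of \<open>\<phi>\<close> are missing.\<close>
lemma C_proper: "C \<noteq> circle"
proof -
  have "\<phi> \<in> marked \<tau> \<phi>" unfolding marked_def by (rule CollectI, rule exI[of _ 0], rule exI[of _ 0]) simp
  then have "G \<phi> < G \<phi> + J \<phi> / 2 \<and> G \<phi> + J \<phi> / 2 < Gr \<phi>" using J_pos_iff unfolding Gr_def by simp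
  then have "circ (G \<phi> + J \<phi> / 2) \<notin> C" unfolding circ_in_C Clift_def by blast
  then show ?thesis by auto
qed

text \<open>\<open>f\<close> is a Denjoy map: an orientation-preserving homeomorphism with rotation number
  \<open>\<tau>\<close>, not conjugate to a rotation since it is aperiodic yet has the proper minimal set \<open>C\<close>.\<close>
lemma denjoy: "denjoy_map f"
  unfolding denjoy_map_def orient_pres_homeo_def
proof (intro conjI exI)
  show "homeomorphism circle circle f (induced (inv F))"
    by (rule homeo_induced[OF F_strict F_surj]) (simp add: F_one)
  show "lift_of F f" "strict_mono F" "\<tau> \<notin> \<rat>" by (fact lift_F F_strict irrational)+
  show "rot_number f = circ \<tau>" by (rule rot_number_eqI[OF lift_F F_strict F_rotation_limit])
  show "\<not> conj_to_rotation f"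
  proof (rule not_conj_to_rotation[where K = C])
    show "\<exists>z\<in>circle. (f ^^ q) z \<noteq> z" if "q > 0" for q using f_aperiodic[OF that] by auto
  qed (use minimal C_proper in \<open>auto simp: minimal_set_def\<close>)
qed

theorem denjoy_blowup_properties:
  "denjoy_map f
    \<and> (\<forall>z\<in>circle. f (rot (1/2) z) = rot (1/2) (f z))
    \<and> rot_number f = circ \<tau>
    \<and> minimal_set f C \<and> cantor_set C \<and> rot (1/2) ` C = C
    \<and> cantor_function C P
    \<and> (\<forall>z\<in>circle. P (rot (1/2) z) = rot (1/2) (P z))
    \<and> P ` accessible C = circ ` marked \<tau> \<phi>
    \<and> (\<forall>z\<in>circle. P (f z) = rot \<tau> (P z))"
  using denjoy f_half rot_number_eqI[OF lift_F F_strict F_rotation_limit] minimal cantor C_half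
    P_cantor_function P_half P_accessible P_f by blast

end

section \<open>Construction of the fibres\<close>

lemma jump_ivt:
  fixes G J :: "real \<Rightarrow> real"
  assumes left: "\<And>y. (G \<longlongrightarrow> G y) (at_left y)"
    and right: "\<And>y. (G \<longlongrightarrow> G y + J y) (at_right y)"
    and below: "G a \<le> x" and bdd: "bdd_above {y. G y \<le> x}"
  shows "\<exists>y. G y \<le> x \<and> x \<le> G y + J y"
proof -
  define A where "A = {y. G y \<le> x}"
  define s where "s = Sup A"
  have ub: "y \<in> A \<Longrightarrow> y \<le> s" for y unfolding s_def A_def by (rule cSup_upper[OF _ bdd])
  have "G s \<le> x"
  proof (rule ccontr)
    assume "\<not> G s \<le> x"
    then have "x < G s" by simp
    then have "\<forall>\<^sub>F y in at_left s. x < G y" by (rule order_tendstoD(1)[OF left])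
    then obtain b where b: "b < s" "\<And>y. b < y \<Longrightarrow> y < s \<Longrightarrow> x < G y"
      unfolding eventually_at_left_field by blast
    obtain y where y: "y \<in> A" "b < y"
      using less_cSup_iff[of A b] below bdd b(1) unfolding s_def A_def by blast
    have "y \<noteq> s" using y(1) \<open>\<not> G s \<le> x\<close> A_def by blast
    then show False using b(2)[of y] y ub[of y] A_def by force
  qed
  moreover have "x \<le> G s + J s"
  proof (rule ccontr)
    assume "\<not> x \<le> G s + J s"
    then have "G s + J s < x" by simp
    then have "\<forall>\<^sub>F y in at_right s. G y < x" by (rule order_tendstoD(2)[OF right])
    moreover have "\<forall>\<^sub>F y in at_right s. s < y" by (rule eventually_at_right_less)
    ultimately have "\<forall>\<^sub>F y in at_right s. G y < x \<and> s < y" by (rule eventually_conj)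
    then obtain y where "G y < x" "s < y" using eventually_happens'[of "at_right s"] by auto
    then show False using ub[of y] A_def by force
  qed
  ultimately show ?thesis by blast
qed

definition int_enum :: "nat \<Rightarrow> int" where
  "int_enum k = (if even k then int (k div 2) else - int (k div 2) - 1)"

lemma int_enum_surj: "\<exists>k. int_enum k = n"
proof (cases "n \<ge> 0")
  case True
  then show ?thesis by (intro exI[of _ "2 * nat n"]) (simp add: int_enum_def)
next
  case False
  have "int_enum (2 * nat (- n - 1) + 1) = n" using False by (simp add: int_enum_def)
  then show ?thesis by blast
qed

definition wt :: "nat \<Rightarrow> real" where "wt k = (1/2) ^ k"

lemma wt_sums: "wt sums 2"
  unfolding wt_def using geometric_sums[of "1/2 :: real"] by simp

lemma wt_summable: "summable wt" using wt_sums by (rule sums_summable)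
lemma wt_suminf: "suminf wt = 2" using wt_sums by (rule sums_unique[symmetric])
lemma wt_pos: "wt k > 0" unfolding wt_def by simp

lemma ceil_step: "z < y \<Longrightarrow> \<lceil>z\<rceil> + (if z \<in> \<int> then 1 else 0) \<le> \<lceil>y::real\<rceil>"
proof (cases "z \<in> \<int>")
  case True
  assume zy: "z < y"
  from True obtain m where m: "z = of_int m" by (auto elim: Ints_cases)
  have "m < \<lceil>y\<rceil>" using zy m by (simp add: less_ceiling_iff)
  then show ?thesis using True m by simp
qed (simp add: ceiling_mono)

context
  fixes \<tau> \<phi> :: real
begin

text \<open>The marked points modulo 1/2 are \<open>jump_pt k + \<int>/2\<close>, \<open>k \<in> \<nat>\<close>.  \<open>steps k\<close> counts
  (with sign, normalised at 0) the points of \<open>jump_pt k + \<int>/2\<close> to the left of \<open>y\<close>; it is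
  left-continuous and jumps by \<open>hit k y\<close> at \<open>y\<close>.\<close>
definition jump_pt :: "nat \<Rightarrow> real" where "jump_pt k = \<phi> + of_int (int_enum k) * \<tau>"

definition steps :: "nat \<Rightarrow> real \<Rightarrow> real" where
  "steps k y = of_int (\<lceil>2 * (y - jump_pt k)\<rceil> - \<lceil>- 2 * jump_pt k\<rceil>)"

definition hit :: "nat \<Rightarrow> real \<Rightarrow> real" where
  "hit k y = (if 2 * (y - jump_pt k) \<in> \<int> then 1 else 0)"

definition step_sum where "step_sum y = (\<Sum>k. wt k * steps k y)"
definition jump_sum where "jump_sum y = (\<Sum>k. wt k * hit k y)"

text \<open>The fibres of the blow-up.  Translation by 1/2 adds 2 to \<open>step_sum\<close>, so the factor
  1/5 makes \<open>Gb\<close> equivariant; strict monotonicity comes from the summand \<open>y\<close>.\<close>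
definition Gb where "Gb y = (y + step_sum y) / 5"
definition Jb where "Jb y = jump_sum y / 5"

lemma steps_bounds: "2*y - 1 < steps k y" "steps k y < 2*y + 1"
proof -
  have a: "of_int \<lceil>2 * (y - jump_pt k)\<rceil> - 1 < 2 * y - 2 * jump_pt k"
    "2 * y - 2 * jump_pt k \<le> of_int \<lceil>2 * (y - jump_pt k)\<rceil>"
    using ceiling_correct[of "2 * (y - jump_pt k)"] by (simp_all add: algebra_simps)
  have b: "of_int \<lceil>- 2 * jump_pt k\<rceil> - 1 < - 2 * jump_pt k" "- 2 * jump_pt k \<le> of_int \<lceil>- 2 * jump_pt k\<rceil>"
    using ceiling_correct[of "- 2 * jump_pt k"] by simp_all
  show "2*y - 1 < steps k y" "steps k y < 2*y + 1" unfolding steps_def of_int_diff using a b by linarith+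
qed

lemma steps_abs: "\<bar>steps k y\<bar> \<le> 2 * \<bar>y\<bar> + 1"
  using steps_bounds[where k=k and y=y] by (simp add: abs_le_iff) linarith

lemma hit_01: "0 \<le> hit k y" "hit k y \<le> 1" unfolding hit_def by auto

lemma summable_steps: "summable (\<lambda>k. wt k * steps k y)"
proof (rule summable_comparison_test')
  show "summable (\<lambda>k. wt k * (2 * \<bar>y\<bar> + 1))" by (intro summable_mult2 wt_summable)
  show "norm (wt n * steps n y) \<le> wt n * (2 * \<bar>y\<bar> + 1)" for n
    using steps_abs[of n y] wt_pos[of n] by (simp add: abs_mult)
qed

lemma summable_hit: "summable (\<lambda>k. wt k * hit k y)"
proof (rule summable_comparison_test')
  show "norm (wt n * hit n y) \<le> wt n" for n
    using hit_01[of n y] wt_pos[of n] by (simp add: abs_mult)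
qed (rule wt_summable)

lemma jump_sum_nonneg: "0 \<le> jump_sum y"
  unfolding jump_sum_def by (intro suminf_nonneg summable_hit) (simp add: hit_01 wt_pos less_imp_le)

lemma steps_half: "steps k (y + 1/2) = steps k y + 1"
proof -
  have e: "2 * (y + 1/2 - jump_pt k) = 2 * (y - jump_pt k) + 1" by (simp add: algebra_simps)
  show ?thesis unfolding steps_def e ceiling_add_one by simp
qed

lemma hit_half: "hit k (y + 1/2) = hit k y"
proof -
  have e: "2 * (y + 1/2 - jump_pt k) = 2 * (y - jump_pt k) + 1" by (simp add: algebra_simps)
  have "(t + 1 \<in> \<int>) = (t \<in> \<int>)" for t :: real
    by (metis Ints_1 Ints_diff Ints_add add_diff_cancel)
  then show ?thesis unfolding hit_def e by simp
qed

text \<open>Translation by 1/2 passes over one point of each \<open>jump_pt k + \<int>/2\<close>, adding the total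
  weight 2.\<close>
lemma step_sum_half: "step_sum (y + 1/2) = step_sum y + 2"
proof -
  have "step_sum (y + 1/2) = (\<Sum>k. wt k * steps k y + wt k)"
    unfolding step_sum_def steps_half by (simp add: algebra_simps)
  also have "\<dots> = step_sum y + suminf wt"
    unfolding step_sum_def by (rule suminf_add[symmetric, OF summable_steps wt_summable])
  finally show ?thesis using wt_suminf by simp
qed

lemma jump_sum_half: "jump_sum (y + 1/2) = jump_sum y" unfolding jump_sum_def hit_half ..

lemma Gb_half: "Gb (y + 1/2) = Gb y + 1/2" unfolding Gb_def step_sum_half by (simp add: field_simps)

lemma step_sum_jump: "z < y \<Longrightarrow> step_sum z + jump_sum z \<le> step_sum y"
proof -
  assume zy: "z < y"
  have t: "steps k z + hit k z \<le> steps k y" for k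
  proof -
    have "2 * (z - jump_pt k) < 2 * (y - jump_pt k)" using zy by simp
    from ceil_step[OF this] show ?thesis unfolding steps_def hit_def
      by (cases "2 * (z - jump_pt k) \<in> \<int>") (simp_all, linarith+)
  qed
  have "step_sum z + jump_sum z = (\<Sum>k. wt k * steps k z + wt k * hit k z)"
    unfolding step_sum_def jump_sum_def by (rule suminf_add[OF summable_steps summable_hit])
  also have "\<dots> \<le> step_sum y" unfolding step_sum_def
  proof (rule suminf_le)
    show "wt k * steps k z + wt k * hit k z \<le> wt k * steps k y" for k
      using t[of k] wt_pos[of k] by (simp add: distrib_left[symmetric])
  qed (intro summable_add summable_steps summable_hit, rule summable_steps)
  finally show ?thesis .
qed

lemma jump_sum_pos_iff: "0 < jump_sum y \<longleftrightarrow> y \<in> marked \<tau> \<phi>"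
proof -
  have "0 < jump_sum y \<longleftrightarrow> (\<exists>k. 0 < wt k * hit k y)"
    unfolding jump_sum_def by (rule suminf_pos_iff[OF summable_hit]) (simp add: hit_01 wt_pos less_imp_le)
  also have "\<dots> \<longleftrightarrow> (\<exists>k. 2 * (y - jump_pt k) \<in> \<int>)" using wt_pos by (auto simp: hit_def)
  also have "\<dots> \<longleftrightarrow> y \<in> marked \<tau> \<phi>"
  proof
    assume "\<exists>k. 2 * (y - jump_pt k) \<in> \<int>"
    then obtain k m where "2 * (y - jump_pt k) = of_int m" by (auto elim: Ints_cases)
    then have "y = \<phi> + of_int (int_enum k) * \<tau> + of_int m / 2" unfolding jump_pt_def by (simp add: field_simps)
    then show "y \<in> marked \<tau> \<phi>" unfolding marked_def by blast
  next
    assume "y \<in> marked \<tau> \<phi>"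
    then obtain n m where y: "y = \<phi> + of_int n * \<tau> + of_int m / 2" unfolding marked_def by auto
    obtain k where k: "int_enum k = n" using int_enum_surj by blast
    have "2 * (y - jump_pt k) = of_int m" unfolding y jump_pt_def k by (simp add: field_simps)
    then show "\<exists>k. 2 * (y - jump_pt k) \<in> \<int>" by (metis Ints_of_int)
  qed
  finally show ?thesis .
qed

lemma step_sum_bounds: "2 * (2*y - 1) \<le> step_sum y" "step_sum y \<le> 2 * (2*y + 1)"
proof -
  have lo: "(\<Sum>k. wt k * (2*y - 1)) = 2 * (2*y - 1)" "(\<Sum>k. wt k * (2*y + 1)) = 2 * (2*y + 1)"
    using wt_suminf suminf_mult2[OF wt_summable] by metis+
  have "(\<Sum>k. wt k * (2*y - 1)) \<le> step_sum y" "step_sum y \<le> (\<Sum>k. wt k * (2*y + 1))"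
    unfolding step_sum_def by (rule suminf_le;
      use steps_bounds wt_pos in \<open>auto intro: mult_left_mono less_imp_le summable_mult2 wt_summable summable_steps\<close>)+
  then show "2 * (2*y - 1) \<le> step_sum y" "step_sum y \<le> 2 * (2*y + 1)" using lo by simp_all
qed

lemma steps_left: "\<forall>\<^sub>F y in at_left y0. steps k y = steps k y0"
proof -
  let ?t = "2 * (y0 - jump_pt k)"
  let ?m = "\<lceil>?t\<rceil>"
  have "of_int ?m - 1 < ?t" using ceiling_correct by blast
  then have "jump_pt k + (of_int ?m - 1) / 2 < y0" by (simp add: field_simps)
  then have "\<forall>\<^sub>F y in at_left y0. y \<in> {jump_pt k + (of_int ?m - 1) / 2<..<y0}"
    by (rule eventually_at_left_real)
  then show ?thesis
  proof (rule eventually_mono)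
    fix y assume y: "y \<in> {jump_pt k + (of_int ?m - 1) / 2<..<y0}"
    have a: "of_int ?m - 1 < 2 * (y - jump_pt k)" using y by (simp add: field_simps)
    have "2 * (y - jump_pt k) < ?t" using y by simp
    then have b: "2 * (y - jump_pt k) \<le> of_int ?m" using le_of_int_ceiling[of ?t] by linarith
    from a b have "\<lceil>2 * (y - jump_pt k)\<rceil> = ?m" by (simp add: ceiling_eq_iff)
    then show "steps k y = steps k y0" unfolding steps_def by simp
  qed
qed

lemma steps_right: "\<forall>\<^sub>F y in at_right y0. steps k y = steps k y0 + hit k y0"
proof -
  let ?t = "2 * (y0 - jump_pt k)"
  let ?m = "\<lceil>?t\<rceil>"
  show ?thesis
  proof (cases "?t \<in> \<int>")
    case True
    then have tm: "?t = of_int ?m" by (metis Ints_cases ceiling_of_int)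
    have "\<forall>\<^sub>F y in at_right y0. y \<in> {y0<..<y0 + 1/2}" by (rule eventually_at_right_real) simp
    then show ?thesis
    proof (rule eventually_mono)
      fix y assume y: "y \<in> {y0<..<y0 + 1/2}"
      have "of_int (?m + 1) - 1 < 2 * (y - jump_pt k)" "2 * (y - jump_pt k) \<le> of_int (?m + 1)"
        using y tm by (simp_all add: field_simps)
      then have "\<lceil>2 * (y - jump_pt k)\<rceil> = ?m + 1" by (simp only: ceiling_eq_iff)
      then show "steps k y = steps k y0 + hit k y0" unfolding steps_def hit_def using True by simp
    qed
  next
    case False
    have "?t \<noteq> of_int ?m" using False by (metis Ints_of_int)
    moreover have m1: "of_int ?m - 1 < ?t" "?t \<le> of_int ?m" using ceiling_correct[of ?t] by auto
    ultimately have "?t < of_int ?m" by (simp add: order_less_le)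
    then have "y0 < jump_pt k + of_int ?m / 2" by (simp add: field_simps)
    then have "\<forall>\<^sub>F y in at_right y0. y \<in> {y0<..<jump_pt k + of_int ?m / 2}"
      by (rule eventually_at_right_real)
    then show ?thesis
    proof (rule eventually_mono)
      fix y assume y: "y \<in> {y0<..<jump_pt k + of_int ?m / 2}"
      then have "of_int ?m - 1 < 2 * (y - jump_pt k)" "2 * (y - jump_pt k) \<le> of_int ?m"
        using m1(1) by (simp_all add: field_simps)
      then have "\<lceil>2 * (y - jump_pt k)\<rceil> = ?m" by (simp add: ceiling_eq_iff)
      then show "steps k y = steps k y0 + hit k y0" unfolding steps_def hit_def using False by simp
    qed
  qed
qed

text \<open>Near any point the series defining \<open>step_sum\<close> converges uniformly (Weierstrass), so
  one-sided limits may be taken termwise.\<close>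
lemma step_sum_uniform:
  "uniform_limit {y0 - 1..y0 + 1} (\<lambda>n y. \<Sum>k<n. wt k * steps k y) step_sum sequentially"
  unfolding step_sum_def
proof (rule Weierstrass_m_test)
  show "summable (\<lambda>k. wt k * (2 * (\<bar>y0\<bar> + 1) + 1))" by (intro summable_mult2 wt_summable)
  fix k :: nat and y :: real assume "y \<in> {y0 - 1..y0 + 1}"
  then have "\<bar>steps k y\<bar> \<le> 2 * (\<bar>y0\<bar> + 1) + 1" using steps_abs[of k y] by auto
  then show "norm (wt k * steps k y) \<le> wt k * (2 * (\<bar>y0\<bar> + 1) + 1)"
    using wt_pos[of k] by (simp add: abs_mult mult_left_mono)
qed

lemma step_sum_left: "(step_sum \<longlongrightarrow> step_sum y0) (at_left y0)"
proof (rule swap_uniform_limit'[OF _ _ step_sum_uniform[of y0]])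
  show "\<forall>\<^sub>F n in sequentially. ((\<lambda>y. \<Sum>k<n. wt k * steps k y) \<longlongrightarrow> (\<Sum>k<n. wt k * steps k y0)) (at_left y0)"
  proof (intro always_eventually allI)
    fix n
    have "\<forall>\<^sub>F y in at_left y0. \<forall>k\<in>{..<n}. steps k y = steps k y0"
      by (rule eventually_ball_finite) (auto intro: steps_left)
    then have "\<forall>\<^sub>F y in at_left y0. (\<Sum>k<n. wt k * steps k y) = (\<Sum>k<n. wt k * steps k y0)"
      by (rule eventually_mono) simp
    then show "((\<lambda>y. \<Sum>k<n. wt k * steps k y) \<longlongrightarrow> (\<Sum>k<n. wt k * steps k y0)) (at_left y0)"
      by (rule tendsto_eventually)
  qed
  show "(\<lambda>n. \<Sum>k<n. wt k * steps k y0) \<longlonglongrightarrow> step_sum y0"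
    unfolding step_sum_def by (rule summable_LIMSEQ[OF summable_steps])
  have "\<forall>\<^sub>F y in at_left y0. y \<in> {y0 - 1<..<y0}" by (rule eventually_at_left_real) simp
  then show "\<forall>\<^sub>F y in at_left y0. y \<in> {y0 - 1..y0 + 1}" by (rule eventually_mono) auto
qed simp

lemma step_sum_right: "(step_sum \<longlongrightarrow> step_sum y0 + jump_sum y0) (at_right y0)"
proof (rule swap_uniform_limit'[OF _ _ step_sum_uniform[of y0]])
  show "\<forall>\<^sub>F n in sequentially. ((\<lambda>y. \<Sum>k<n. wt k * steps k y) \<longlongrightarrow>
      (\<Sum>k<n. wt k * steps k y0 + wt k * hit k y0)) (at_right y0)"
  proof (intro always_eventually allI)
    fix n
    have "\<forall>\<^sub>F y in at_right y0. \<forall>k\<in>{..<n}. steps k y = steps k y0 + hit k y0"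
      by (rule eventually_ball_finite) (auto intro: steps_right)
    then have "\<forall>\<^sub>F y in at_right y0.
        (\<Sum>k<n. wt k * steps k y) = (\<Sum>k<n. wt k * steps k y0 + wt k * hit k y0)"
      by (rule eventually_mono) (simp add: distrib_left)
    then show "((\<lambda>y. \<Sum>k<n. wt k * steps k y) \<longlongrightarrow>
        (\<Sum>k<n. wt k * steps k y0 + wt k * hit k y0)) (at_right y0)"
      by (rule tendsto_eventually)
  qed
  have "step_sum y0 + jump_sum y0 = (\<Sum>k. wt k * steps k y0 + wt k * hit k y0)"
    unfolding step_sum_def jump_sum_def by (rule suminf_add[OF summable_steps summable_hit])
  then show "(\<lambda>n. \<Sum>k<n. wt k * steps k y0 + wt k * hit k y0) \<longlonglongrightarrow> step_sum y0 + jump_sum y0"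
    by (simp add: summable_LIMSEQ summable_add summable_steps summable_hit)
  have "\<forall>\<^sub>F y in at_right y0. y \<in> {y0<..<y0 + 1}" by (rule eventually_at_right_real) simp
  then show "\<forall>\<^sub>F y in at_right y0. y \<in> {y0 - 1..y0 + 1}" by (rule eventually_mono) auto
qed simp

lemma Gb_cover: "\<exists>y. Gb y \<le> x \<and> x \<le> Gb y + Jb y"
proof (rule jump_ivt)
  show "(Gb \<longlongrightarrow> Gb y) (at_left y)" for y
    unfolding Gb_def by (intro tendsto_intros step_sum_left) simp
  show "(Gb \<longlongrightarrow> Gb y + Jb y) (at_right y)" for y
    using step_sum_right[of y] unfolding Gb_def Jb_def
    by (auto intro!: tendsto_eq_intros simp: add_divide_distrib)
  have bounds: "y - 2/5 \<le> Gb y" "Gb y \<le> y + 2/5" for y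
    using step_sum_bounds[of y] unfolding Gb_def by (simp_all add: field_simps)
  show "Gb (x - 1) \<le> x" using bounds(2)[of "x - 1"] by simp
  show "bdd_above {y. Gb y \<le> x}"
  proof (rule bdd_aboveI[of _ "x + 1"])
    fix y assume "y \<in> {y. Gb y \<le> x}"
    then show "y \<le> x + 1" using bounds(1)[of y] by simp
  qed
qed

lemma Gb_ordered: "z < y \<Longrightarrow> Gb z + Jb z < Gb y"
proof -
  assume "z < y"
  then have "z + step_sum z + jump_sum z < y + step_sum y" using step_sum_jump[of z y] by linarith
  then show ?thesis unfolding Gb_def Jb_def by (simp add: divide_simps)
qed

lemma blowup_instance:
  assumes "\<tau> \<notin> \<rat>"
  shows "denjoy_blowup Gb Jb \<tau> \<phi>"
  by unfold_locales (use assms jump_sum_nonneg Gb_ordered Gb_cover Gb_half jump_sum_half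
      jump_sum_pos_iff in \<open>auto simp: Jb_def\<close>)

end

theorem proposition3p3:
  fixes \<tau> \<phi> :: real
  assumes "\<tau> \<notin> \<rat>"
  shows "\<exists>f. denjoy_map f
    \<and> (\<forall>z\<in>circle. f (rot (1/2) z) = rot (1/2) (f z))
    \<and> rot_number f = circ \<tau>
    \<and> (\<exists>C. minimal_set f C \<and> cantor_set C \<and> rot (1/2) ` C = C
        \<and> (\<exists>P. cantor_function C P
             \<and> (\<forall>z\<in>circle. P (rot (1/2) z) = rot (1/2) (P z))
             \<and> P ` accessible C = {circ (\<phi> + of_int n * \<tau>) | n. True}
                                 \<union> {circ ((\<phi> + 1/2) + of_int n * \<tau>) | n. True}
             \<and> (\<forall>z\<in>circle. P (f z) = rot \<tau> (P z))))"
proof -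
  interpret denjoy_blowup "Gb \<tau> \<phi>" "Jb \<tau> \<phi>" \<tau> \<phi> by (rule blowup_instance[OF assms])
  show ?thesis using denjoy_blowup_properties unfolding marked_circ by blast
qed

end
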